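(* Let $G$ be a simple, undirected, locally finite graph and $i\sim j$ an edge such that $\sharp_\square^i(i,j)\neq\emptyset$. Then $$\sharp_\square^{\mathfrak m}(i,j)\ \ge\ \frac{\max\{|\sharp_\square^i(i,j)|,\,|\sharp_\square^j(i,j)|\}}{\gamma_{\max}(i,j)}.$$
   Context: $S_1(v)$ denotes the set of neighbours of $v$. For an edge $i\sim j$: $\sharp_\square^i(i,j)=\{k\in S_1(i)\setminus (S_1(j)\cup\{j\}) : \exists\, w\in (S_1(k)\cap S_1(j))\setminus (S_1(i)\cup\{i\})\}$, and $\sharp_\square^j(i,j)$ is defined symmetrically with the roles of $i$ and $j$ exchanged (these are the neighbours of $i$, resp. $j$, lying on a 4-cycle $i\sim k\sim w\sim j\sim i$ with no diagonal). Note $\sharp_\square^i\ne\emptyset$ iff $\sharp_\square^j\neq\emptyset$. $\gamma_{\max}(i,j)=\max\big\{\max_{k\in\sharp_\square^i}|(S_1(k)\cap S_1(j))\setminus(S_1(i)\cup\{i\})|,\ \max_{w\in\sharp_\square^j}|(S_1(w)\cap S_1(i))\setminus(S_1(j)\cup\{j\})|\big\}$. For $U\subset V$, $\mathcal D(U)$ is the set of injective maps $\varphi:U\to V$ with $z\sim\varphi(z)$ for all $z\in U$, and $\sharp_\square^{\mathfrak m}(i,j)=\max\{|U|: U\subset\sharp_\square^i,\ \exists\varphi\in\mathcal D(U)\text{ with }\varphi(U)\subset\sharp_\square^j\}$. *)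

theory Defs
  imports Complex_Main
begin

definition simple_graph :: "('a \<Rightarrow> 'a \<Rightarrow> bool) \<Rightarrow> bool" where
  "simple_graph E \<longleftrightarrow> (\<forall>x y. E x y \<longrightarrow> E y x) \<and> (\<forall>x. \<not> E x x)"

definition locally_finite :: "('a \<Rightarrow> 'a \<Rightarrow> bool) \<Rightarrow> bool" where
  "locally_finite E \<longleftrightarrow> (\<forall>x. finite {y. E x y})"

definition S1 :: "('a \<Rightarrow> 'a \<Rightarrow> bool) \<Rightarrow> 'a \<Rightarrow> 'a set" where
  "S1 E v = {y. E v y}"

text \<open>sq_i E i j = \<sharp>_\<box>^i(i,j); the symmetric one is sq_i E j i.\<close>
definition sq_i :: "('a \<Rightarrow> 'a \<Rightarrow> bool) \<Rightarrow> 'a \<Rightarrow> 'a \<Rightarrow> 'a set" where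
  "sq_i E i j = {k \<in> S1 E i - (S1 E j \<union> {j}).
                   \<exists>w. w \<in> (S1 E k \<inter> S1 E j) - (S1 E i \<union> {i})}"

definition gamma_max :: "('a \<Rightarrow> 'a \<Rightarrow> bool) \<Rightarrow> 'a \<Rightarrow> 'a \<Rightarrow> nat" where
  "gamma_max E i j = max
     (Max ((\<lambda>k. card ((S1 E k \<inter> S1 E j) - (S1 E i \<union> {i}))) ` sq_i E i j))
     (Max ((\<lambda>w. card ((S1 E w \<inter> S1 E i) - (S1 E j \<union> {j}))) ` sq_i E j i))"

definition D_maps :: "('a \<Rightarrow> 'a \<Rightarrow> bool) \<Rightarrow> 'a set \<Rightarrow> ('a \<Rightarrow> 'a) set" where
  "D_maps E U = {\<phi>. inj_on \<phi> U \<and> (\<forall>z\<in>U. E z (\<phi> z))}"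

definition sq_m :: "('a \<Rightarrow> 'a \<Rightarrow> bool) \<Rightarrow> 'a \<Rightarrow> 'a \<Rightarrow> nat" where
  "sq_m E i j = Max {card U | U. U \<subseteq> sq_i E i j \<and>
                    (\<exists>\<phi>\<in>D_maps E U. \<phi> ` U \<subseteq> sq_i E j i)}"

end

theory Submission
  imports Defs
begin

(* In the bipartite graph between \<sharp>^i and \<sharp>^j every vertex has a neighbour on the other
   side and at most \<gamma>_max of them.  A greedy matching discards, with each edge a \<mapsto> b it
   picks, only the at most \<gamma>_max neighbours of b, so it matches at least |\<sharp>^i| / \<gamma>_max
   vertices.  The same argument from the other side, followed by reversing the matching,
   gives |\<sharp>^j| / \<gamma>_max. *)

lemma greedy_matching:
  fixes R :: "'a \<Rightarrow> 'b \<Rightarrow> bool"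
  assumes "finite A"
    and "\<forall>a\<in>A. \<exists>b\<in>B. R a b"
    and "\<forall>b\<in>B. card {a\<in>A. R a b} \<le> g"
  shows "\<exists>U \<phi>. U \<subseteq> A \<and> inj_on \<phi> U \<and> \<phi> ` U \<subseteq> B \<and> (\<forall>z\<in>U. R z (\<phi> z))
           \<and> card A \<le> g * card U"
  using assms
proof (induction A arbitrary: B rule: finite_psubset_induct)
  case (psubset A)
  show ?case
  proof (cases "A = {}")
    case True
    then show ?thesis by (intro exI[of _ "{}"]) auto
  next
    case False
    then obtain a where a: "a \<in> A" by auto
    then obtain b where b: "b \<in> B" "R a b" using psubset.prems(1) by auto
    define A' where "A' = A - {x\<in>A. R x b}"
    have A'_psub: "A' \<subset> A" using a b by (auto simp: A'_def)
    have "finite A'" using A'_psub psubset.hyps by (meson finite_subset psubset_imp_subset)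
    have covered: "\<forall>x\<in>A'. \<exists>y\<in>B - {b}. R x y"
      using psubset.prems(1) unfolding A'_def by fastforce
    have bounded: "\<forall>y\<in>B - {b}. card {x\<in>A'. R x y} \<le> g"
    proof
      fix y assume y: "y \<in> B - {b}"
      have "card {x\<in>A'. R x y} \<le> card {x\<in>A. R x y}"
        by (rule card_mono) (use psubset.hyps in \<open>auto simp: A'_def\<close>)
      also have "\<dots> \<le> g" using psubset.prems(2) y by auto
      finally show "card {x\<in>A'. R x y} \<le> g" .
    qed
    obtain U \<phi> where U: "U \<subseteq> A'" "inj_on \<phi> U" "\<phi> ` U \<subseteq> B - {b}"
      "\<forall>z\<in>U. R z (\<phi> z)" "card A' \<le> g * card U"
      using psubset.IH[OF A'_psub covered bounded] by blast
    have aU: "a \<notin> U" using U(1) b by (auto simp: A'_def)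
    have "finite U" using U(1) \<open>finite A'\<close> by (rule finite_subset)
    have "A = A' \<union> {x\<in>A. R x b}" and "A' \<inter> {x\<in>A. R x b} = {}" by (auto simp: A'_def)
    then have "card A = card A' + card {x\<in>A. R x b}"
      using psubset.hyps by (metis card_Un_disjoint finite_Un)
    also have "\<dots> \<le> g * card U + g" using U(5) psubset.prems(2) b by (intro add_mono) auto
    also have "\<dots> = g * card (insert a U)" using aU \<open>finite U\<close> by simp
    finally have card_A: "card A \<le> g * card (insert a U)" .
    show ?thesis
    proof (intro exI[of _ "insert a U"] exI[of _ "\<phi>(a := b)"] conjI)
      show "insert a U \<subseteq> A" using a U(1) A'_psub by auto
      show "inj_on (\<phi>(a := b)) (insert a U)"
        using U(2,3) aU by (auto simp: inj_on_def image_subset_iff)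
      show "(\<phi>(a := b)) ` insert a U \<subseteq> B" using U(3) aU b by auto
      show "\<forall>z\<in>insert a U. R z ((\<phi>(a := b)) z)" using U(4) aU b by auto
    qed (fact card_A)
  qed
qed

lemma finite_sq_i:
  assumes "locally_finite E"
  shows "finite (sq_i E i j)"
proof (rule finite_subset)
  show "sq_i E i j \<subseteq> {y. E i y}" by (auto simp: sq_i_def S1_def)
  show "finite {y. E i y}" using assms by (simp add: locally_finite_def)
qed

lemma sq_i_neighbourhood:
  assumes "simple_graph E" and "k \<in> sq_i E i j"
  shows "(S1 E k \<inter> S1 E j) - (S1 E i \<union> {i}) = {w \<in> sq_i E j i. E k w}"
  using assms unfolding simple_graph_def sq_i_def S1_def by auto

lemma sq_i_has_neighbour:
  assumes "simple_graph E" and "k \<in> sq_i E i j"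
  shows "\<exists>w \<in> sq_i E j i. E k w"
  using sq_i_neighbourhood[OF assms] assms(2) unfolding sq_i_def by blast

lemma gamma_max_commute: "gamma_max E j i = gamma_max E i j"
  unfolding gamma_max_def by (simp add: max.commute)

lemma card_sq_i_neighbours_le_gamma_max:
  assumes "simple_graph E" and "locally_finite E" and "k \<in> sq_i E i j"
  shows "card {w \<in> sq_i E j i. E k w} \<le> gamma_max E i j"
proof -
  let ?f = "\<lambda>k. card ((S1 E k \<inter> S1 E j) - (S1 E i \<union> {i}))"
  have "card {w \<in> sq_i E j i. E k w} = ?f k"
    using sq_i_neighbourhood[OF assms(1,3)] by simp
  also have "\<dots> \<le> Max (?f ` sq_i E i j)"
    using finite_sq_i[OF assms(2)] assms(3) by simp
  finally show ?thesis unfolding gamma_max_def by linarith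
qed

lemma gamma_max_pos:
  assumes "simple_graph E" and "locally_finite E" and "sq_i E i j \<noteq> {}"
  shows "gamma_max E i j > 0"
proof -
  obtain k where k: "k \<in> sq_i E i j" using assms(3) by blast
  then have "{w \<in> sq_i E j i. E k w} \<noteq> {}" using sq_i_has_neighbour[OF assms(1)] by blast
  then have "card {w \<in> sq_i E j i. E k w} > 0"
    using finite_sq_i[OF assms(2)] by (simp add: card_gt_0_iff)
  then show ?thesis using card_sq_i_neighbours_le_gamma_max[OF assms(1,2) k] by linarith
qed

lemma card_le_sq_m:
  assumes "locally_finite E"
    and "U \<subseteq> sq_i E i j" and "\<phi> \<in> D_maps E U" and "\<phi> ` U \<subseteq> sq_i E j i"
  shows "card U \<le> sq_m E i j"
proof -
  let ?S = "{card U | U. U \<subseteq> sq_i E i j \<and> (\<exists>\<phi>\<in>D_maps E U. \<phi> ` U \<subseteq> sq_i E j i)}"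
  have "?S \<subseteq> {..card (sq_i E i j)}"
  proof
    fix n assume "n \<in> ?S"
    then obtain V where "n = card V" "V \<subseteq> sq_i E i j" by blast
    then show "n \<in> {..card (sq_i E i j)}"
      using finite_sq_i[OF assms(1)] by (simp add: card_mono)
  qed
  then have "finite ?S" by (rule finite_subset) simp
  moreover have "card U \<in> ?S" using assms(2-4) by blast
  ultimately show ?thesis unfolding sq_m_def by (rule Max_ge)
qed

lemma D_maps_inv_into:
  assumes "simple_graph E" and "\<phi> \<in> D_maps E U"
  shows "inv_into U \<phi> \<in> D_maps E (\<phi> ` U)"
  using assms unfolding simple_graph_def D_maps_def by (auto simp: inj_on_inv_into)

lemma sq_m_commute:
  assumes "simple_graph E"
  shows "sq_m E j i = sq_m E i j"
proof -
  have reverse: "{card U | U. U \<subseteq> sq_i E a b \<and> (\<exists>\<phi>\<in>D_maps E U. \<phi> ` U \<subseteq> sq_i E b a)}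
      \<subseteq> {card U | U. U \<subseteq> sq_i E b a \<and> (\<exists>\<phi>\<in>D_maps E U. \<phi> ` U \<subseteq> sq_i E a b)}" for a b
  proof clarify
    fix U \<phi> assume U: "U \<subseteq> sq_i E a b" and \<phi>: "\<phi> \<in> D_maps E U" "\<phi> ` U \<subseteq> sq_i E b a"
    have "card (\<phi> ` U) = card U" using \<phi>(1) by (simp add: D_maps_def card_image)
    moreover have "inv_into U \<phi> ` \<phi> ` U \<subseteq> sq_i E a b"
      using U \<phi>(1) by (simp add: D_maps_def)
    ultimately show "\<exists>V. card U = card V \<and> V \<subseteq> sq_i E b a
                       \<and> (\<exists>\<psi>\<in>D_maps E V. \<psi> ` V \<subseteq> sq_i E a b)"
      using \<phi> D_maps_inv_into[OF assms \<phi>(1)] by metis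
  qed
  show ?thesis unfolding sq_m_def using reverse[of i j] reverse[of j i] by (simp add: subset_antisym)
qed

lemma card_sq_i_le_gamma_max_sq_m:
  assumes "simple_graph E" and "locally_finite E"
  shows "card (sq_i E i j) \<le> gamma_max E i j * sq_m E i j"
proof -
  have few_preimages: "\<forall>w\<in>sq_i E j i. card {k \<in> sq_i E i j. E k w} \<le> gamma_max E i j"
  proof
    fix w assume w: "w \<in> sq_i E j i"
    have "{k \<in> sq_i E i j. E k w} = {k \<in> sq_i E i j. E w k}"
      using assms(1) unfolding simple_graph_def by blast
    then show "card {k \<in> sq_i E i j. E k w} \<le> gamma_max E i j"
      using card_sq_i_neighbours_le_gamma_max[OF assms w] by (simp add: gamma_max_commute)
  qed
  obtain U \<phi> where U: "U \<subseteq> sq_i E i j" "inj_on \<phi> U" "\<phi> ` U \<subseteq> sq_i E j i"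
      "\<forall>z\<in>U. E z (\<phi> z)" "card (sq_i E i j) \<le> gamma_max E i j * card U"
    using greedy_matching[OF finite_sq_i[OF assms(2)] _ few_preimages] sq_i_has_neighbour[OF assms(1)]
    by blast
  have "card U \<le> sq_m E i j"
    using U(2,4) by (intro card_le_sq_m[OF assms(2) U(1) _ U(3)]) (simp add: D_maps_def)
  then show ?thesis using U(5) by (meson le_trans mult_le_mono2)
qed

theorem mainTheorem3:
  fixes E :: "'a \<Rightarrow> 'a \<Rightarrow> bool" and i j :: 'a
  assumes "simple_graph E" and "locally_finite E"
    and "E i j" and "sq_i E i j \<noteq> {}"
  shows "real (sq_m E i j) \<ge>
           real (max (card (sq_i E i j)) (card (sq_i E j i))) / real (gamma_max E i j)"
proof -
  have "card (sq_i E i j) \<le> gamma_max E i j * sq_m E i j"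
    using card_sq_i_le_gamma_max_sq_m[OF assms(1,2)] .
  moreover have "card (sq_i E j i) \<le> gamma_max E i j * sq_m E i j"
    using card_sq_i_le_gamma_max_sq_m[OF assms(1,2), of j i]
    by (simp add: gamma_max_commute sq_m_commute[OF assms(1)])
  ultimately have "real (max (card (sq_i E i j)) (card (sq_i E j i)))
                     \<le> real (gamma_max E i j) * real (sq_m E i j)"
    by (simp flip: of_nat_mult)
  then show ?thesis
    using gamma_max_pos[OF assms(1,2,4)] by (simp add: divide_le_eq mult.commute)
qed

end
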